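(* Let $X$ be a real Banach space and let $T\subset X\times X^*$ be a maximal monotone operator which is a linear subspace of $X\times X^*$. Then (1) $T^\vdash\subset\{(x,x^* )\mid \varphi_T(x,x^* )=0\}$; (2) $T\cap T^\vdash=T\cap\{(x,x^* )\mid \langle x,x^*\rangle=0\}$.
   Context: $\langle x,x^*\rangle=x^*(x)$. Operators $X\rightrightarrows X^*$ are identified with subsets of $X\times X^*$; $T$ is monotone if $\langle x-y,x^*-y^*\rangle\ge0$ for all $(x,x^* ),(y,y^* )\in T$, maximal monotone if moreover it is maximal under inclusion among monotone operators. The Fitzpatrick function of $T$ is $\varphi_T(x,x^* )=\sup_{(y,y^* )\in T}\big(\langle x,y^*\rangle+\langle y,x^*\rangle-\langle y,y^*\rangle\big)$. For $B\subset X\times X^*$, $B^\vdash=\{(y,y^* )\mid \langle x,y^*\rangle+\langle y,x^*\rangle=0\ \forall (x,x^* )\in B\}$. *)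

theory Defs
  imports "HOL-Analysis.Analysis"
begin

text \<open>The dual X* of a real Banach space X is the space of bounded linear
functionals X \<Rightarrow>L real; the duality pairing is evaluation.\<close>

definition pairing :: "'a::real_normed_vector \<Rightarrow> ('a \<Rightarrow>\<^sub>L real) \<Rightarrow> real" where
  "pairing x xs = blinfun_apply xs x"

definition monotone_op :: "('a::real_normed_vector \<times> ('a \<Rightarrow>\<^sub>L real)) set \<Rightarrow> bool" where
  "monotone_op T \<longleftrightarrow>
     (\<forall>(x, xs)\<in>T. \<forall>(y, ys)\<in>T. pairing (x - y) (xs - ys) \<ge> 0)"

definition maximal_monotone :: "('a::real_normed_vector \<times> ('a \<Rightarrow>\<^sub>L real)) set \<Rightarrow> bool" where
  "maximal_monotone T \<longleftrightarrow> monotone_op T \<and> (\<forall>S. monotone_op S \<and> T \<subseteq> S \<longrightarrow> S = T)"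

text \<open>Fitzpatrick function, valued in the extended reals (supremum may be infinite).\<close>
definition fitzpatrick :: "('a::real_normed_vector \<times> ('a \<Rightarrow>\<^sub>L real)) set \<Rightarrow> 'a \<Rightarrow> ('a \<Rightarrow>\<^sub>L real) \<Rightarrow> ereal" where
  "fitzpatrick T x xs =
     (SUP p\<in>T. ereal (pairing x (snd p) + pairing (fst p) xs - pairing (fst p) (snd p)))"

definition perp_op :: "('a::real_normed_vector \<times> ('a \<Rightarrow>\<^sub>L real)) set \<Rightarrow> ('a \<times> ('a \<Rightarrow>\<^sub>L real)) set" where
  "perp_op B = {(y, ys). \<forall>(x, xs)\<in>B. pairing x ys + pairing y xs = 0}"

end

theory Submission
  imports Defs
begin

text \<open>On a monotone linear subspace \<open>T\<close> (which contains \<open>(0, 0)\<close>) the quadratic form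
  \<open>\<langle>x, x*\<rangle>\<close> is nonnegative. Hence \<open>\<phi>\<^sub>T\<close> vanishes on \<open>T\<^sup>\<turnstile>\<close>: every term of the supremum is
  \<open>-\<langle>y, y*\<rangle> \<le> 0\<close>, and \<open>(0, 0)\<close> contributes \<open>0\<close>. For the second claim, if \<open>(x, x*) \<in> T\<close> has
  \<open>\<langle>x, x*\<rangle> = 0\<close> and \<open>(y, y*) \<in> T\<close>, then \<open>(x + t y, x* + t y*) \<in> T\<close> for all real \<open>t\<close>, so the
  quadratic \<open>t (\<langle>x, y*\<rangle> + \<langle>y, x*\<rangle>) + t\<^sup>2 \<langle>y, y*\<rangle>\<close> is nonnegative and its linear coefficient
  must vanish.\<close>

lemma pairing_add_scaleR:
  "pairing (x + t *\<^sub>R y) (xs + t *\<^sub>R ys) =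
   pairing x xs + t * (pairing x ys + pairing y xs) + t * t * pairing y ys"
  unfolding pairing_def
  by (simp add: blinfun.add_left blinfun.add_right blinfun.scaleR_left
      blinfun.scaleR_right algebra_simps)

lemma linear_coeff_zero_if_quadratic_nonneg:
  fixes a b :: real
  assumes "b \<ge> 0" and nonneg: "\<And>t. a * t + b * t * t \<ge> 0"
  shows "a = 0"
proof (rule ccontr)
  assume "a \<noteq> 0"
  define t where "t = - a / (b + 1)"
  have "a * t + b * t * t = - (a\<^sup>2 / (b + 1)\<^sup>2)"
    using \<open>b \<ge> 0\<close> unfolding t_def
    by (simp add: divide_simps) (simp add: algebra_simps power2_eq_square)
  also have "\<dots> < 0"
    using \<open>a \<noteq> 0\<close> \<open>b \<ge> 0\<close> by (simp add: divide_pos_pos)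
  finally show False using nonneg[of t] by linarith
qed

lemma zero_mem_subspace_pair: "subspace T \<Longrightarrow> (0, 0) \<in> T"
  by (metis subspace_0 zero_prod_def)

lemma monotone_op_pairing_nonneg:
  assumes "monotone_op T" "(0, 0) \<in> T" "(x, xs) \<in> T"
  shows "pairing x xs \<ge> 0"
  using assms unfolding monotone_op_def by fastforce

lemma fitzpatrick_nonneg:
  assumes "(0, 0) \<in> T"
  shows "fitzpatrick T x xs \<ge> 0"
  unfolding fitzpatrick_def
  using assms by (intro SUP_upper2[of "(0, 0)"]) (auto simp: pairing_def)

lemma perp_op_subset_fitzpatrick_zero:
  assumes "monotone_op T" "subspace T"
  shows "perp_op T \<subseteq> {(x, xs). fitzpatrick T x xs = 0}"
proof safe
  fix y ys assume perp: "(y, ys) \<in> perp_op T"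
  have zero: "(0, 0) \<in> T" using \<open>subspace T\<close> by (rule zero_mem_subspace_pair)
  have "ereal (pairing y xs + pairing x ys - pairing x xs) \<le> 0" if "(x, xs) \<in> T" for x xs
  proof -
    have "pairing x ys + pairing y xs = 0" using perp that unfolding perp_op_def by auto
    moreover have "pairing x xs \<ge> 0"
      using monotone_op_pairing_nonneg[OF \<open>monotone_op T\<close> zero that] .
    ultimately show ?thesis by simp
  qed
  then have "fitzpatrick T y ys \<le> 0"
    unfolding fitzpatrick_def by (intro SUP_least) auto
  with fitzpatrick_nonneg[OF zero, of y ys] show "fitzpatrick T y ys = 0" by simp
qed

lemma inter_perp_op_eq_pairing_zero:
  assumes "monotone_op T" "subspace T"
  shows "T \<inter> perp_op T = T \<inter> {(x, xs). pairing x xs = 0}"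
proof safe
  fix x xs assume "(x, xs) \<in> perp_op T" "(x, xs) \<in> T"
  then have "pairing x xs + pairing x xs = 0" unfolding perp_op_def by auto
  then show "pairing x xs = 0" by simp
next
  fix x xs assume xT: "(x, xs) \<in> T" and isotropic: "pairing x xs = 0"
  have nonneg: "pairing z zs \<ge> 0" if "(z, zs) \<in> T" for z zs
    using assms zero_mem_subspace_pair that by (blast intro: monotone_op_pairing_nonneg)
  show "(x, xs) \<in> perp_op T" unfolding perp_op_def
  proof clarsimp
    fix y ys assume yT: "(y, ys) \<in> T"
    show "pairing y xs + pairing x ys = 0"
    proof (rule linear_coeff_zero_if_quadratic_nonneg)
      show "pairing y ys \<ge> 0" using nonneg yT .
      fix t :: real
      have "(x, xs) + t *\<^sub>R (y, ys) \<in> T"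
        using \<open>subspace T\<close> xT yT by (intro subspace_add subspace_scale)
      with nonneg[of "x + t *\<^sub>R y" "xs + t *\<^sub>R ys"]
      show "(pairing y xs + pairing x ys) * t + pairing y ys * t * t \<ge> 0"
        by (simp add: pairing_add_scaleR isotropic algebra_simps)
    qed
  qed
qed

theorem lemma1:
  fixes T :: "('a::banach \<times> ('a \<Rightarrow>\<^sub>L real)) set"
  assumes "maximal_monotone T"
    and "subspace T"
  shows "perp_op T \<subseteq> {(x, xs). fitzpatrick T x xs = 0} \<and>
         T \<inter> perp_op T = T \<inter> {(x, xs). pairing x xs = 0}"
proof -
  have "monotone_op T" using assms(1) unfolding maximal_monotone_def by blast
  with assms(2) show ?thesis
    using perp_op_subset_fitzpatrick_zero inter_perp_op_eq_pairing_zero by blast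
qed

end
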